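(* Let $\Delta\subset\mathbb{R}^2$ be a lattice polygon with $\operatorname{lw}(\Delta)=d$. If $\Delta$ has two linearly independent lattice width directions $v,w\in\mathbb{Z}^2$, then $\operatorname{ls}_\square(\Delta)=d$.
   Context: A lattice polygon is the convex hull of a finite non-empty set of points of $\mathbb{Z}^2$. A lattice direction is a non-zero primitive vector $v\in\mathbb{Z}^2$. For a lattice polygon $\Delta$ and a lattice direction $v$, $\operatorname{lw}_v(\Delta)=\max_{P\in\Delta}\langle P,v\rangle-\min_{P\in\Delta}\langle P,v\rangle$, and the lattice width is $\operatorname{lw}(\Delta)=\min_v\operatorname{lw}_v(\Delta)$ over all lattice directions $v$. A lattice width direction of $\Delta$ is a lattice direction $v$ with $\operatorname{lw}_v(\Delta)=\operatorname{lw}(\Delta)$. A unimodular transformation is a map $x\mapsto Ax+b$ with $A\in\mathrm{GL}_2(\mathbb{Z})$, $b\in\mathbb{Z}^2$; two lattice polygons are equivalent if one is mapped onto the other by a unimodular transformation. With $\square=\operatorname{conv}\{(0,0),(1,0),(1,1),(0,1)\}$, $\operatorname{ls}_\square(\Delta)$ is the smallest integer $d\ge 0$ for which there is a unimodular transformation $\varphi$ with $\varphi(\Delta)\subset d\square=[0,d]\times[0,d]$. *)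

theory Defs
  imports "HOL-Analysis.Analysis"
begin

definition lattice_pt :: "int \<times> int \<Rightarrow> real \<times> real" where
  "lattice_pt p = (real_of_int (fst p), real_of_int (snd p))"

definition lattice_polygon :: "(real \<times> real) set \<Rightarrow> bool" where
  "lattice_polygon \<Delta> \<longleftrightarrow>
     (\<exists>S :: (int \<times> int) set. finite S \<and> S \<noteq> {} \<and> \<Delta> = convex hull (lattice_pt ` S))"

definition lattice_direction :: "int \<times> int \<Rightarrow> bool" where
  "lattice_direction v \<longleftrightarrow> v \<noteq> (0, 0) \<and> gcd (fst v) (snd v) = 1"

definition pair_dot :: "real \<times> real \<Rightarrow> int \<times> int \<Rightarrow> real" where
  "pair_dot P v = fst P * real_of_int (fst v) + snd P * real_of_int (snd v)"

definition lw_dir :: "(real \<times> real) set \<Rightarrow> int \<times> int \<Rightarrow> real" where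
  "lw_dir \<Delta> v = (SUP P\<in>\<Delta>. pair_dot P v) - (INF P\<in>\<Delta>. pair_dot P v)"

definition lw :: "(real \<times> real) set \<Rightarrow> real" where
  "lw \<Delta> = (INF v\<in>{v. lattice_direction v}. lw_dir \<Delta> v)"

definition lattice_width_direction :: "(real \<times> real) set \<Rightarrow> int \<times> int \<Rightarrow> bool" where
  "lattice_width_direction \<Delta> v \<longleftrightarrow> lattice_direction v \<and> lw_dir \<Delta> v = lw \<Delta>"

definition unimodular :: "(real \<times> real \<Rightarrow> real \<times> real) \<Rightarrow> bool" where
  "unimodular \<phi> \<longleftrightarrow>
     (\<exists>a b c e t1 t2 :: int. \<bar>a * e - b * c\<bar> = 1 \<and>
        \<phi> = (\<lambda>(x, y). (of_int a * x + of_int b * y + of_int t1,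
                        of_int c * x + of_int e * y + of_int t2)))"

definition scaled_square :: "nat \<Rightarrow> (real \<times> real) set" where
  "scaled_square d = {(x, y). 0 \<le> x \<and> x \<le> real d \<and> 0 \<le> y \<and> y \<le> real d}"

definition ls_square :: "(real \<times> real) set \<Rightarrow> nat" where
  "ls_square \<Delta> = (LEAST d. \<exists>\<phi>. unimodular \<phi> \<and> \<phi> ` \<Delta> \<subseteq> scaled_square d)"

end

theory Submission
  imports Defs
begin

text \<open>
  Let \<open>\<Delta>\<close> be the convex hull of a finite set \<open>S\<close> of lattice points; its width in a direction
  \<open>u\<close> is the integer \<open>max\<^sub>S \<langle>_,u\<rangle> - min\<^sub>S \<langle>_,u\<rangle>\<close>. Complete the primitive width direction \<open>v\<close>
  to a lattice basis \<open>(v, u)\<close>. Since \<open>u\<close> is only determined modulo \<open>v\<close> and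
  \<open>w = \<alpha> v + det(v,w) u\<close>, it can be chosen with \<open>m u = a v \<plusminus> w\<close>, where
  \<open>m = |det(v,w)|\<close> and \<open>0 \<le> a < m\<close>. Width is subadditive and homogeneous in the direction, so
  \<open>m \<cdot> width\<^sub>u \<le> a d + d \<le> m d\<close>, i.e. \<open>width\<^sub>u \<le> d\<close>. The map \<open>x \<mapsto> (\<langle>x,v\<rangle>, \<langle>x,u\<rangle>)\<close>, translated
  by integers, then puts \<open>\<Delta>\<close> into \<open>[0,d]\<^sup>2\<close>. Conversely, the first row of any unimodular map
  of \<open>\<Delta>\<close> into \<open>[0,d']\<^sup>2\<close> is a lattice direction of width at most \<open>d'\<close>, so \<open>d = lw \<Delta> \<le> d'\<close>.
\<close>

definition int_dot :: "int \<times> int \<Rightarrow> int \<times> int \<Rightarrow> int" where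
  "int_dot s u = fst s * fst u + snd s * snd u"

definition max_dot :: "(int \<times> int) set \<Rightarrow> int \<times> int \<Rightarrow> int" where
  "max_dot S u = Max ((\<lambda>s. int_dot s u) ` S)"

definition min_dot :: "(int \<times> int) set \<Rightarrow> int \<times> int \<Rightarrow> int" where
  "min_dot S u = Min ((\<lambda>s. int_dot s u) ` S)"

definition dot_width :: "(int \<times> int) set \<Rightarrow> int \<times> int \<Rightarrow> int" where
  "dot_width S u = max_dot S u - min_dot S u"

lemma pair_dot_lattice_pt: "pair_dot (lattice_pt s) u = real_of_int (int_dot s u)"
  by (simp add: pair_dot_def lattice_pt_def int_dot_def)

lemma pair_dot_eq_inner: "pair_dot P u = inner (real_of_int (fst u), real_of_int (snd u)) P"
  by (cases P) (simp add: pair_dot_def inner_real_def mult.commute)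

lemma min_dot_le_int_dot: "finite S \<Longrightarrow> s \<in> S \<Longrightarrow> min_dot S u \<le> int_dot s u"
  unfolding min_dot_def by simp

lemma int_dot_le_max_dot: "finite S \<Longrightarrow> s \<in> S \<Longrightarrow> int_dot s u \<le> max_dot S u"
  unfolding max_dot_def by simp

lemma max_dot_attained:
  assumes "finite S" "S \<noteq> {}"
  obtains s where "s \<in> S" "int_dot s u = max_dot S u"
  using Max_in[of "(\<lambda>s. int_dot s u) ` S"] assms unfolding max_dot_def by fastforce

lemma min_dot_attained:
  assumes "finite S" "S \<noteq> {}"
  obtains s where "s \<in> S" "int_dot s u = min_dot S u"
  using Min_in[of "(\<lambda>s. int_dot s u) ` S"] assms unfolding min_dot_def by fastforce

lemma abs_int_dot_diff_le_dot_width: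
  assumes "finite S" "s \<in> S" "t \<in> S"
  shows "\<bar>int_dot s u - int_dot t u\<bar> \<le> dot_width S u"
  using min_dot_le_int_dot[OF assms(1,2), of u] int_dot_le_max_dot[OF assms(1,2), of u]
    min_dot_le_int_dot[OF assms(1,3), of u] int_dot_le_max_dot[OF assms(1,3), of u]
  unfolding dot_width_def abs_le_iff by linarith

lemma dot_width_nonneg: "finite S \<Longrightarrow> S \<noteq> {} \<Longrightarrow> 0 \<le> dot_width S u"
  using abs_int_dot_diff_le_dot_width[of S _ _ u] by (meson abs_ge_zero all_not_in_conv order_trans)

lemma dot_width_combination_le:
  assumes S: "finite S" "S \<noteq> {}"
    and comb: "m * fst u = a * fst v + b * fst w" "m * snd u = a * snd v + b * snd w"
  shows "m * dot_width S u \<le> \<bar>a\<bar> * dot_width S v + \<bar>b\<bar> * dot_width S w"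
proof -
  obtain t1 where t1: "t1 \<in> S" "int_dot t1 u = max_dot S u" using max_dot_attained[OF S] .
  obtain t2 where t2: "t2 \<in> S" "int_dot t2 u = min_dot S u" using min_dot_attained[OF S] .
  define p where "p = int_dot t1 v - int_dot t2 v"
  define q where "q = int_dot t1 w - int_dot t2 w"
  have dot_comb: "m * int_dot t u = a * int_dot t v + b * int_dot t w" for t
  proof -
    have "m * int_dot t u = fst t * (m * fst u) + snd t * (m * snd u)"
      by (simp add: int_dot_def algebra_simps)
    then show ?thesis unfolding comb by (simp add: int_dot_def algebra_simps)
  qed
  have "m * dot_width S u = a * p + b * q"
    unfolding dot_width_def t1(2)[symmetric] t2(2)[symmetric] p_def q_def
    by (simp add: right_diff_distrib dot_comb algebra_simps)
  also have "\<dots> \<le> \<bar>a\<bar> * \<bar>p\<bar> + \<bar>b\<bar> * \<bar>q\<bar>"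
    by (metis abs_ge_self abs_mult abs_triangle_ineq order_trans)
  also have "\<dots> \<le> \<bar>a\<bar> * dot_width S v + \<bar>b\<bar> * dot_width S w"
    using abs_int_dot_diff_le_dot_width[OF S(1) t1(1) t2(1)]
    by (intro add_mono mult_left_mono) (simp_all add: p_def q_def)
  finally show ?thesis .
qed

lemma lattice_hull_pair_dot_bounds:
  assumes "finite S" "P \<in> convex hull (lattice_pt ` S)"
  shows "real_of_int (min_dot S u) \<le> pair_dot P u \<and> pair_dot P u \<le> real_of_int (max_dot S u)"
proof -
  let ?a = "(real_of_int (fst u), real_of_int (snd u))"
  have "lattice_pt ` S \<subseteq>
      {x. inner ?a x \<le> real_of_int (max_dot S u)} \<inter> {x. inner ?a x \<ge> real_of_int (min_dot S u)}"
    by (auto simp: pair_dot_eq_inner[symmetric] pair_dot_lattice_pt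
        intro: min_dot_le_int_dot[OF assms(1)] int_dot_le_max_dot[OF assms(1)])
  then have "convex hull (lattice_pt ` S) \<subseteq>
      {x. inner ?a x \<le> real_of_int (max_dot S u)} \<inter> {x. inner ?a x \<ge> real_of_int (min_dot S u)}"
    by (intro hull_minimal convex_Int convex_halfspace_le convex_halfspace_ge)
  then show ?thesis using assms(2) by (auto simp: pair_dot_eq_inner)
qed

lemma
  assumes "finite S" "S \<noteq> {}"
  shows SUP_pair_dot_lattice_hull:
      "(SUP P\<in>convex hull (lattice_pt ` S). pair_dot P u) = real_of_int (max_dot S u)"
    and INF_pair_dot_lattice_hull:
      "(INF P\<in>convex hull (lattice_pt ` S). pair_dot P u) = real_of_int (min_dot S u)"
proof -
  let ?D = "convex hull (lattice_pt ` S)"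
  obtain s1 where s1: "s1 \<in> S" "int_dot s1 u = max_dot S u" using max_dot_attained[OF assms] .
  obtain s2 where s2: "s2 \<in> S" "int_dot s2 u = min_dot S u" using min_dot_attained[OF assms] .
  have "lattice_pt s1 \<in> ?D" "lattice_pt s2 \<in> ?D"
    using s1(1) s2(1) by (auto intro: hull_subset[THEN subsetD])
  then have "real_of_int (max_dot S u) \<in> (\<lambda>P. pair_dot P u) ` ?D"
    and "real_of_int (min_dot S u) \<in> (\<lambda>P. pair_dot P u) ` ?D"
    using s1(2) s2(2) by (metis image_eqI pair_dot_lattice_pt)+
  then show "(SUP P\<in>?D. pair_dot P u) = real_of_int (max_dot S u)"
    and "(INF P\<in>?D. pair_dot P u) = real_of_int (min_dot S u)"
    by (auto intro!: cSup_eq_maximum cInf_eq_minimum dest: lattice_hull_pair_dot_bounds[OF assms(1)])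
qed

lemma lw_dir_lattice_hull:
  "finite S \<Longrightarrow> S \<noteq> {} \<Longrightarrow>
    lw_dir (convex hull (lattice_pt ` S)) u = real_of_int (dot_width S u)"
  by (simp add: lw_dir_def dot_width_def SUP_pair_dot_lattice_hull INF_pair_dot_lattice_hull)

lemma lw_le_lw_dir:
  assumes "lattice_polygon \<Delta>" "lattice_direction u"
  shows "lw \<Delta> \<le> lw_dir \<Delta> u"
proof -
  obtain S where S: "finite S" "S \<noteq> {}" and \<Delta>: "\<Delta> = convex hull (lattice_pt ` S)"
    using assms(1) unfolding lattice_polygon_def by blast
  have "bdd_below (lw_dir \<Delta> ` {v. lattice_direction v})"
    using dot_width_nonneg[OF S] by (intro bdd_belowI[of _ 0]) (auto simp: \<Delta> lw_dir_lattice_hull[OF S])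
  then show ?thesis unfolding lw_def using assms(2) by (intro cINF_lower) auto
qed

lemma lw_dir_le_of_strip:
  assumes "\<Delta> \<noteq> {}" and strip: "\<And>P. P \<in> \<Delta> \<Longrightarrow> 0 \<le> pair_dot P u + t \<and> pair_dot P u + t \<le> c"
  shows "lw_dir \<Delta> u \<le> c"
proof -
  have "(SUP P\<in>\<Delta>. pair_dot P u) \<le> c - t" using strip by (intro cSUP_least assms(1)) force
  moreover have "- t \<le> (INF P\<in>\<Delta>. pair_dot P u)" using strip by (intro cINF_greatest assms(1)) force
  ultimately show ?thesis unfolding lw_dir_def by linarith
qed

lemma lattice_direction_of_unimodular_row:
  assumes "\<bar>a * e - b * c\<bar> = 1"
  shows "lattice_direction (a, b)"
proof -
  have "gcd a b dvd \<bar>a * e - b * c\<bar>" by (simp add: dvd_diff)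
  then have "gcd a b = 1" using assms gcd_ge_0_int[of a b] by (simp add: zdvd1_eq)
  then show ?thesis using assms by (auto simp: lattice_direction_def)
qed

lemma lw_le_of_unimodular_image_subset:
  assumes "lattice_polygon \<Delta>" "unimodular \<phi>" "\<phi> ` \<Delta> \<subseteq> scaled_square d"
  shows "lw \<Delta> \<le> real d"
proof -
  obtain a b c e t1 t2 :: int where det: "\<bar>a * e - b * c\<bar> = 1" and
    \<phi>: "\<phi> = (\<lambda>(x, y). (of_int a * x + of_int b * y + of_int t1, of_int c * x + of_int e * y + of_int t2))"
    using assms(2) unfolding unimodular_def by blast
  have "\<Delta> \<noteq> {}" using assms(1) by (auto simp: lattice_polygon_def)
  moreover have "0 \<le> pair_dot P (a, b) + t1 \<and> pair_dot P (a, b) + t1 \<le> real d" if "P \<in> \<Delta>" for P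
    using assms(3) that by (cases P) (force simp: \<phi> scaled_square_def pair_dot_def mult.commute)
  ultimately have "lw_dir \<Delta> (a, b) \<le> real d" by (rule lw_dir_le_of_strip)
  then show ?thesis
    using lw_le_lw_dir[OF assms(1) lattice_direction_of_unimodular_row[OF det]] by linarith
qed

lemma unimodular_image_subset_square:
  assumes "lattice_polygon \<Delta>" "fst v * snd u - snd v * fst u = 1"
    and "lw_dir \<Delta> v \<le> real d" "lw_dir \<Delta> u \<le> real d"
  shows "\<exists>\<phi>. unimodular \<phi> \<and> \<phi> ` \<Delta> \<subseteq> scaled_square d"
proof -
  obtain S where S: "finite S" "S \<noteq> {}" and \<Delta>: "\<Delta> = convex hull (lattice_pt ` S)"
    using assms(1) unfolding lattice_polygon_def by blast
  define \<phi> where "\<phi> = (\<lambda>(x::real, y::real).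
    (of_int (fst v) * x + of_int (snd v) * y + of_int (- min_dot S v),
     of_int (fst u) * x + of_int (snd u) * y + of_int (- min_dot S u)))"
  have "unimodular \<phi>"
    unfolding unimodular_def \<phi>_def using assms(2)
    by (intro exI[of _ "fst v"] exI[of _ "snd v"] exI[of _ "fst u"] exI[of _ "snd u"]
        exI[of _ "- min_dot S v"] exI[of _ "- min_dot S u"]) simp
  moreover have "\<phi> P \<in> scaled_square d" if P: "P \<in> \<Delta>" for P
  proof -
    have "real_of_int (min_dot S v) \<le> pair_dot P v \<and> pair_dot P v \<le> real_of_int (max_dot S v)"
      "real_of_int (min_dot S u) \<le> pair_dot P u \<and> pair_dot P u \<le> real_of_int (max_dot S u)"
      using lattice_hull_pair_dot_bounds[OF S(1)] P unfolding \<Delta> by blast+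
    then show ?thesis using assms(3,4)
      by (cases P) (auto simp: \<phi>_def scaled_square_def \<Delta> lw_dir_lattice_hull[OF S] dot_width_def
          pair_dot_def mult.commute)
  qed
  ultimately show ?thesis by blast
qed

lemma exists_basis_completion_between:
  fixes v w :: "int \<times> int"
  assumes "gcd (fst v) (snd v) = 1" and "fst v * snd w - snd v * fst w \<noteq> 0"
  obtains u a s m where "fst v * snd u - snd v * fst u = 1"
    and "0 \<le> a" "a < m" "\<bar>s\<bar> = 1"
    and "m * fst u = a * fst v + s * fst w" "m * snd u = a * snd v + s * snd w"
proof -
  obtain x y where xy: "x * fst v + y * snd v = 1" using bezout_int[of "fst v" "snd v"] assms(1) by auto
  define D where "D = fst v * snd w - snd v * fst w"
  define m where "m = \<bar>D\<bar>"
  define s where "s = sgn D"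
  define c where "c = - s * (fst w * x + snd w * y)"
  \<comment> \<open>\<open>(-y, x)\<close> completes \<open>v\<close> to a basis; subtracting \<open>j v\<close> reduces the \<open>v\<close>-coefficient mod \<open>m\<close>\<close>
  define a where "a = c mod m"
  define j where "j = c div m"
  define u where "u = (- y - j * fst v, x - j * snd v)"
  have "m > 0" using assms(2) by (simp add: m_def D_def)
  have s: "\<bar>s\<bar> = 1" and m: "m = s * D" using assms(2) by (auto simp: s_def m_def D_def abs_sgn sgn_if)
  have c: "c = m * j + a" by (simp add: a_def j_def)
  have "m * fst u = - m * y - (c - a) * fst v" "m * snd u = m * x - (c - a) * snd v"
    by (simp_all add: u_def c algebra_simps)
  then have "m * fst u = a * fst v + s * fst w * (x * fst v + y * snd v)"
    "m * snd u = a * snd v + s * snd w * (x * fst v + y * snd v)"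
    unfolding m c_def D_def by (simp_all add: algebra_simps)
  moreover have "fst v * snd u - snd v * fst u = 1"
    using xy by (simp add: u_def algebra_simps)
  ultimately show thesis using that[of u a m s] \<open>m > 0\<close> s xy by (simp add: a_def)
qed

theorem lemma2p1:
  fixes \<Delta> :: "(real \<times> real) set" and d :: nat and v w :: "int \<times> int"
  assumes "lattice_polygon \<Delta>"
    and "lw \<Delta> = real d"
    and "lattice_width_direction \<Delta> v"
    and "lattice_width_direction \<Delta> w"
    and "fst v * snd w - snd v * fst w \<noteq> 0"
  shows "ls_square \<Delta> = d"
proof -
  obtain S where S: "finite S" "S \<noteq> {}" and \<Delta>: "\<Delta> = convex hull (lattice_pt ` S)"
    using assms(1) unfolding lattice_polygon_def by blast
  have width: "dot_width S v = int d" "dot_width S w = int d"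
    using assms(2-4) by (simp_all add: lattice_width_direction_def \<Delta> lw_dir_lattice_hull[OF S])
  obtain u a s m where det: "fst v * snd u - snd v * fst u = 1"
    and a: "0 \<le> a" "a < m" and s: "\<bar>s\<bar> = 1"
    and comb: "m * fst u = a * fst v + s * fst w" "m * snd u = a * snd v + s * snd w"
    using exists_basis_completion_between assms(3,5)
    by (metis lattice_width_direction_def lattice_direction_def)
  have "m * dot_width S u \<le> (a + 1) * int d"
    using dot_width_combination_le[OF S comb] width a s by (simp add: algebra_simps)
  also have "\<dots> \<le> m * int d" using a by (intro mult_right_mono) auto
  finally have "lw_dir \<Delta> u \<le> real d"
    using a by (simp add: \<Delta> lw_dir_lattice_hull[OF S])
  then have "\<exists>\<phi>. unimodular \<phi> \<and> \<phi> ` \<Delta> \<subseteq> scaled_square d"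
    using unimodular_image_subset_square[OF assms(1) det] assms(2,3)
    by (simp add: lattice_width_direction_def)
  then show ?thesis
    unfolding ls_square_def using lw_le_of_unimodular_image_subset[OF assms(1)] assms(2)
    by (intro Least_equality) auto
qed

end
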